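(* Let $N\in\mathbb N_{\ge1}$, $\Delta\mathbf x,\mathbf y,\Delta\mathbf y\in\mathcal T^N_0$ and define $f:[0,1]\times[0,1]\to\mathcal T^N_1$ by $f(s,t)=\exp_N(s\Delta\mathbf x)\exp_N(\mathbf y+t\Delta\mathbf y)\exp_N(-\mathbf y)$. Then $f(0,0)=1$ and $$(\partial_sf)|_{(0,0)}=\Delta\mathbf x,\qquad(\partial_tf)|_{(0,0)}=G(\mathrm{ad}\,\mathbf y)(\Delta\mathbf y).$$ Moreover, for all $n\in\{2,\dots,N\}$, $$\sup_{0\le s,t\le1}\big|(\nabla^2f^{(n)})|_{(s,t)}\big|\le c_n\sum_{\|\ell\|=n,\ |\ell|\ge2}\big(|\Delta\mathbf x^{(l_1)}|+|\Delta\mathbf y^{(l_1)}|\big)\big(|\Delta\mathbf x^{(l_2)}|+|\Delta\mathbf y^{(l_2)}|\big)z_{l_3}\cdots z_{l_k},$$ where $c_n>0$ depends only on $n$, the sum is over $\ell=(l_1,\dots,l_k)\in(\mathbb N_{\ge1})^k$, $k=|\ell|\ge2$, $l_1+\dots+l_k=n$ (empty products equal $1$), and $z_l:=\max\{|\Delta\mathbf x^{(l)}|,|\mathbf y^{(l)}|,|(\mathbf y+\Delta\mathbf y)^{(l)}|\}$ for $l\in\{1,\dots,N-2\}$.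
   Context: $\mathcal T^N=\bigoplus_{k=0}^N(\mathbb R^d)^{\otimes k}$ with concatenation product truncated above level $N$; $\mathbf x^{(k)}$ is the level-$k$ component; $\mathcal T^N_0$ ($\mathcal T^N_1$) the elements with scalar part $0$ ($1$); $\exp_N$ the exponential series; $|\cdot|$ the Euclidean norm on $(\mathbb R^d)^{\otimes k}$. $\mathrm{ad}\,\mathbf x(\mathbf y)=\mathbf x\mathbf y-\mathbf y\mathbf x$ and $G(\mathrm{ad}\,\mathbf x)=\sum_{k\ge0}\frac{(\mathrm{ad}\,\mathbf x)^k}{(k+1)!}$. $|\nabla^2f^{(n)}|$ denotes a (fixed) norm of the collection of second-order partial derivatives $\partial_{ss}f^{(n)},\partial_{st}f^{(n)},\partial_{tt}f^{(n)}$ of the level-$n$ component. *)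

theory Defs
  imports "HOL-Analysis.Analysis"
begin

text \<open>Truncated tensor algebra over R^d: an element is a function from words
(lists of letters in {0..<d}) to reals, supported on words of length at most N.
The value at a word w is the coefficient of e_w.\<close>

type_synonym tens = "nat list \<Rightarrow> real"

definition words :: "nat \<Rightarrow> nat \<Rightarrow> nat list set" where
  "words d k = {w. length w = k \<and> set w \<subseteq> {..<d}}"

definition in_T :: "nat \<Rightarrow> nat \<Rightarrow> tens \<Rightarrow> bool" where
  "in_T d N x \<longleftrightarrow> (\<forall>w. x w \<noteq> 0 \<longrightarrow> length w \<le> N \<and> set w \<subseteq> {..<d})"

definition in_T0 :: "nat \<Rightarrow> nat \<Rightarrow> tens \<Rightarrow> bool" where
  "in_T0 d N x \<longleftrightarrow> in_T d N x \<and> x [] = 0"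

definition tone :: tens where
  "tone w = (if w = [] then 1 else 0)"

definition tadd :: "tens \<Rightarrow> tens \<Rightarrow> tens" where
  "tadd x y = (\<lambda>w. x w + y w)"

definition tscale :: "real \<Rightarrow> tens \<Rightarrow> tens" where
  "tscale a x = (\<lambda>w. a * x w)"

definition tmul :: "nat \<Rightarrow> tens \<Rightarrow> tens \<Rightarrow> tens" where
  "tmul N x y = (\<lambda>w. if length w \<le> N
      then (\<Sum>i\<le>length w. x (take i w) * y (drop i w)) else 0)"

definition tpow :: "nat \<Rightarrow> tens \<Rightarrow> nat \<Rightarrow> tens" where
  "tpow N x k = (tmul N x ^^ k) tone"

text \<open>Truncated exponential; for x with zero scalar part, x^k = 0 for k > N,
so this is the exponential series.\<close>
definition texp :: "nat \<Rightarrow> tens \<Rightarrow> tens" where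
  "texp N x = (\<lambda>w. \<Sum>k\<le>N. tpow N x k w / fact k)"

definition tad :: "nat \<Rightarrow> tens \<Rightarrow> tens \<Rightarrow> tens" where
  "tad N x y = (\<lambda>w. tmul N x y w - tmul N y x w)"

text \<open>G(ad x)(y) = sum_k (ad x)^k y / (k+1)!; in the truncated algebra (ad x)^k = 0
for k > N (ad x kills scalars and raises the level), so the series is this finite sum.\<close>
definition tG :: "nat \<Rightarrow> tens \<Rightarrow> tens \<Rightarrow> tens" where
  "tG N x y = (\<lambda>w. \<Sum>k\<le>N. ((tad N x) ^^ k) y w / fact (k + 1))"

definition lnorm :: "nat \<Rightarrow> nat \<Rightarrow> tens \<Rightarrow> real" where
  "lnorm d k x = sqrt (\<Sum>w\<in>words d k. (x w)\<^sup>2)"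

definition sigf :: "nat \<Rightarrow> tens \<Rightarrow> tens \<Rightarrow> tens \<Rightarrow> real \<Rightarrow> real \<Rightarrow> tens" where
  "sigf N dx y dy s t =
     tmul N (tmul N (texp N (tscale s dx)) (texp N (tadd y (tscale t dy)))) (texp N (tscale (-1) y))"

definition comps2 :: "nat \<Rightarrow> nat list set" where
  "comps2 n = {ls. (\<forall>l\<in>set ls. 1 \<le> l) \<and> sum_list ls = n \<and> 2 \<le> length ls}"

definition zz :: "nat \<Rightarrow> tens \<Rightarrow> tens \<Rightarrow> tens \<Rightarrow> nat \<Rightarrow> real" where
  "zz d dx y dy l = max (lnorm d l dx) (max (lnorm d l y) (lnorm d l (tadd y dy)))"

definition rhs_sum :: "nat \<Rightarrow> nat \<Rightarrow> tens \<Rightarrow> tens \<Rightarrow> tens \<Rightarrow> real" where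
  "rhs_sum d n dx y dy = (\<Sum>ls\<in>comps2 n.
      (lnorm d (ls!0) dx + lnorm d (ls!0) dy) * (lnorm d (ls!1) dx + lnorm d (ls!1) dy)
      * prod_list (map (zz d dx y dy) (drop 2 ls)))"

end

theory Submission
  imports Defs
begin

text \<open>
  Along a line \<open>x(t) = y + t v\<close> the truncated powers \<open>x(t)\<^sup>k\<close>, hence \<open>exp\<^sub>N(x(t))\<close>,
  are polynomial in \<open>t\<close>, and their first and second derivatives are sums of products of
  \<open>x(t)\<close> with one resp. two factors \<open>v\<close>. Hence every partial derivative of \<open>f\<close> of order at
  most two is a product of three such factors, the last one \<open>exp\<^sub>N(-y)\<close>. At the origin
  \<open>exp\<^sub>N(-y)\<close> inverts \<open>exp\<^sub>N(y)\<close>, and \<open>\<partial>\<^sub>t f = G(ad y)(\<Delta>y)\<close> follows by expanding both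
  sides into the products \<open>y\<^sup>i \<Delta>y y\<^sup>m\<close> and comparing binomial coefficients.

  For the bound, the level-\<open>l\<close> norm of a product is at most the convolution of the level
  norms of its factors. Each factor is dominated, level by level, by a sum over the compositions
  of \<open>l\<close> with a fixed number of marked parts, a marked part \<open>k\<close> weighted by
  \<open>|\<Delta>x^(k)| + |\<Delta>y^(k)|\<close> and an unmarked one by \<open>z\<^sub>k\<close>. Concatenation of compositions makes
  these majorants submultiplicative up to a factor \<open>n + 1\<close>; the second derivatives carry two
  marked parts, and that majorant is at most the right-hand side times the number of marked
  compositions of \<open>n\<close>.
\<close>

definition levels_le :: "nat \<Rightarrow> tens \<Rightarrow> bool" where
  "levels_le N x \<longleftrightarrow> (\<forall>w. N < length w \<longrightarrow> x w = 0)"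

definition levels_ge :: "nat \<Rightarrow> tens \<Rightarrow> bool" where
  "levels_ge m x \<longleftrightarrow> (\<forall>w. length w < m \<longrightarrow> x w = 0)"

lemma in_T0_levels_le: "in_T0 d N x \<Longrightarrow> levels_le N x"
  unfolding in_T0_def in_T_def levels_le_def by (meson not_le)

lemma in_T0_levels_ge: "in_T0 d N x \<Longrightarrow> levels_ge 1 x"
  unfolding in_T0_def levels_ge_def by auto

lemma levels_le_tmul: "levels_le N (tmul N x y)"
  by (simp add: levels_le_def tmul_def)

lemma levels_le_tone: "levels_le N tone"
  by (simp add: levels_le_def tone_def)

lemma levels_le_sum: "(\<And>k. levels_le N (f k)) \<Longrightarrow> levels_le N (\<lambda>w. \<Sum>k\<in>K. f k w / c k)"
  by (simp add: levels_le_def)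

lemma levels_ge_0 [simp]: "levels_ge 0 x"
  by (simp add: levels_ge_def)

lemma levels_ge_zero [simp]: "levels_ge m (\<lambda>_. 0)"
  by (simp add: levels_ge_def)

lemma levels_ge_add: "levels_ge m x \<Longrightarrow> levels_ge m y \<Longrightarrow> levels_ge m (\<lambda>w. x w + y w)"
  by (simp add: levels_ge_def)

lemma levels_ge_scale: "levels_ge m x \<Longrightarrow> levels_ge m (\<lambda>w. c * x w)"
  by (simp add: levels_ge_def)

lemma levels_ge_levels_le_zero: "levels_ge m x \<Longrightarrow> levels_le N x \<Longrightarrow> N < m \<Longrightarrow> x w = 0"
  unfolding levels_ge_def levels_le_def by (metis not_less less_le_trans)

lemma tmul_apply: "length w \<le> N \<Longrightarrow> tmul N x y w = (\<Sum>i\<le>length w. x (take i w) * y (drop i w))"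
  by (simp add: tmul_def)

lemma tmul_tone_left: "levels_le N x \<Longrightarrow> tmul N tone x = x"
proof
  fix w assume x: "levels_le N x"
  show "tmul N tone x w = x w"
  proof (cases "length w \<le> N")
    case True
    have "(\<Sum>i\<le>length w. tone (take i w) * x (drop i w)) = (\<Sum>i\<in>{0}. tone (take i w) * x (drop i w))"
      by (rule sum.mono_neutral_right) (auto simp: tone_def)
    then show ?thesis using True by (simp add: tmul_def tone_def)
  qed (use x in \<open>simp add: tmul_def levels_le_def\<close>)
qed

lemma tmul_tone_right: "levels_le N x \<Longrightarrow> tmul N x tone = x"
proof
  fix w assume x: "levels_le N x"
  show "tmul N x tone w = x w"
  proof (cases "length w \<le> N")
    case True
    have "(\<Sum>i\<le>length w. x (take i w) * tone (drop i w)) = (\<Sum>i\<in>{length w}. x (take i w) * tone (drop i w))"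
      by (rule sum.mono_neutral_right) (auto simp: tone_def)
    then show ?thesis using True by (simp add: tmul_def tone_def)
  qed (use x in \<open>simp add: tmul_def levels_le_def\<close>)
qed

lemma tmul_assoc: "tmul N (tmul N x y) z = tmul N x (tmul N y z)"
proof
  fix w
  show "tmul N (tmul N x y) z w = tmul N x (tmul N y z) w"
  proof (cases "length w \<le> N")
    case True
    define l where "l = length w"
    define g where "g j k = x (take j w) * y (take k (drop j w)) * z (drop k (drop j w))" for j k
    have "tmul N (tmul N x y) z w = (\<Sum>i\<le>l. \<Sum>j\<le>i. g j (i - j))"
      using True unfolding l_def
      by (auto simp: tmul_apply sum_distrib_right g_def drop_take intro!: sum.cong)
    also have "\<dots> = (\<Sum>(j,k)\<in>{(j,k). j + k \<le> l}. g j k)"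
      by (rule sum.triangle_reindex_eq[symmetric])
    also have "{(j,k). j + k \<le> l} = Sigma {..l} (\<lambda>j. {..l - j})"
      by auto
    also have "(\<Sum>(j,k)\<in>Sigma {..l} (\<lambda>j. {..l - j}). g j k) = (\<Sum>j\<le>l. \<Sum>k\<le>l - j. g j k)"
      by (rule sum.Sigma[symmetric]) auto
    also have "\<dots> = tmul N x (tmul N y z) w"
      using True unfolding l_def
      by (auto simp: tmul_apply sum_distrib_left g_def mult.assoc intro!: sum.cong)
    finally show ?thesis .
  qed (simp add: tmul_def)
qed

lemma tmul_sum_left: "tmul N (\<lambda>w. \<Sum>k\<in>K. f k w) y w = (\<Sum>k\<in>K. tmul N (f k) y w)"
  by (simp add: tmul_def sum_distrib_right sum.swap[of _ K])

lemma tmul_sum_right: "tmul N y (\<lambda>w. \<Sum>k\<in>K. f k w) w = (\<Sum>k\<in>K. tmul N y (f k) w)"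
  by (simp add: tmul_def sum_distrib_left sum.swap[of _ K])

lemma tmul_scale_left: "tmul N (\<lambda>w. c * x w) y w = c * tmul N x y w"
  by (simp add: tmul_def sum_distrib_left mult.assoc)

lemma tmul_scale_right: "tmul N y (\<lambda>w. c * x w) w = c * tmul N y x w"
  by (simp add: tmul_def sum_distrib_left mult.left_commute)

lemma tmul_divide_left: "tmul N (\<lambda>w. x w / c) y w = tmul N x y w / c"
  using tmul_scale_left[of N "inverse c" x y w] by (simp add: divide_inverse mult.commute)

lemma tmul_divide_right: "tmul N y (\<lambda>w. x w / c) w = tmul N y x w / c"
  using tmul_scale_right[of N y "inverse c" x w] by (simp add: divide_inverse mult.commute)

lemma tmul_zero_left [simp]: "tmul N (\<lambda>_. 0) y = (\<lambda>_. 0)"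
  by (simp add: tmul_def fun_eq_iff)

lemma tmul_zero_right [simp]: "tmul N y (\<lambda>_. 0) = (\<lambda>_. 0)"
  by (simp add: tmul_def fun_eq_iff)

lemma levels_ge_tmul:
  assumes x: "levels_ge a x" and y: "levels_ge b y"
  shows "levels_ge (a + b) (tmul N x y)"
  unfolding levels_ge_def
proof (intro allI impI)
  fix w :: "nat list" assume w: "length w < a + b"
  have "x (take i w) * y (drop i w) = 0" if "i \<le> length w" for i
  proof (cases "i < a")
    case False
    then have "length (drop i w) < b" using w that by auto
    then show ?thesis using y by (simp add: levels_ge_def)
  qed (use x that in \<open>simp add: levels_ge_def\<close>)
  then have "(\<Sum>i\<le>length w. x (take i w) * y (drop i w)) = 0"
    by (intro sum.neutral) auto
  then show "tmul N x y w = 0" by (simp add: tmul_def)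
qed

lemma tpow_0 [simp]: "tpow N x 0 = tone"
  by (simp add: tpow_def)

lemma tpow_Suc: "tpow N x (Suc k) = tmul N x (tpow N x k)"
  by (simp add: tpow_def)

lemma tpow_1: "levels_le N x \<Longrightarrow> tpow N x 1 = x"
  by (simp add: tpow_Suc tmul_tone_right)

lemma levels_le_tpow: "levels_le N (tpow N x k)"
  by (cases k) (simp_all add: tpow_Suc levels_le_tmul levels_le_tone)

lemma tpow_add: "tmul N (tpow N x j) (tpow N x k) = tpow N x (j + k)"
  by (induction j) (simp_all add: tmul_tone_left levels_le_tpow tpow_Suc tmul_assoc)

lemma levels_ge_tpow: "levels_ge 1 x \<Longrightarrow> levels_ge k (tpow N x k)"
  by (induction k) (simp_all add: tpow_Suc levels_ge_tmul[of 1, simplified])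

lemma tpow_scale: "tpow N (\<lambda>w. c * x w) k = (\<lambda>w. c ^ k * tpow N x k w)"
proof (induction k)
  case (Suc k)
  have "tpow N (\<lambda>w. c * x w) (Suc k) = tmul N (\<lambda>w. c * x w) (\<lambda>w. c ^ k * tpow N x k w)"
    by (simp add: tpow_Suc Suc.IH)
  then show ?case
    by (simp add: tpow_Suc fun_eq_iff tmul_scale_left tmul_scale_right mult.assoc)
qed simp

lemma levels_le_texp: "levels_le N (texp N x)"
  unfolding texp_def by (intro levels_le_sum levels_le_tpow)

lemma sum_sum_by_total_degree:
  fixes T :: "nat \<Rightarrow> real"
  assumes "\<And>m. K < m \<Longrightarrow> T m = 0" "K \<le> P" "K \<le> Q"
  shows "(\<Sum>p\<le>P. \<Sum>q\<le>Q. a p q * T (p + q)) = (\<Sum>m\<le>K. (\<Sum>p\<le>m. a p (m - p)) * T m)"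
proof -
  have "(\<Sum>p\<le>P. \<Sum>q\<le>Q. a p q * T (p + q)) = (\<Sum>(p,q)\<in>{..P} \<times> {..Q}. a p q * T (p + q))"
    by (rule sum.cartesian_product)
  also have "\<dots> = (\<Sum>(p,q)\<in>{(p,q). p + q \<le> K}. a p q * T (p + q))"
    using assms by (intro sum.mono_neutral_right) (auto, meson not_le)
  also have "\<dots> = (\<Sum>m\<le>K. \<Sum>p\<le>m. a p (m - p) * T (p + (m - p)))"
    by (rule sum.triangle_reindex_eq)
  also have "\<dots> = (\<Sum>m\<le>K. (\<Sum>p\<le>m. a p (m - p)) * T m)"
    by (simp add: sum_distrib_right)
  finally show ?thesis .
qed

lemma exp_mul_exp_neg_coeff:
  "(\<Sum>p\<le>m. 1 / fact p * ((-1) ^ (m - p) / fact (m - p)) :: real) = (if m = 0 then 1 else 0)"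
proof -
  have "(\<Sum>p\<le>m. 1 / fact p * ((-1) ^ (m - p) / fact (m - p)) :: real)
      = (\<Sum>p\<le>m. of_nat (m choose p) * 1 ^ p * (-1) ^ (m - p)) / fact m"
    by (simp add: sum_divide_distrib binomial_fact)
  also have "\<dots> = (1 + (-1::real)) ^ m / fact m"
    by (simp only: binomial_ring)
  finally show ?thesis by simp
qed

lemma texp_mul_texp_neg:
  assumes "levels_le N x" "levels_ge 1 x"
  shows "tmul N (texp N x) (texp N (\<lambda>w. - x w)) = tone"
proof
  fix w
  have "tmul N (texp N x) (texp N (\<lambda>w. - x w)) w
      = (\<Sum>p\<le>N. \<Sum>q\<le>N. 1 / fact p * ((-1) ^ q / fact q) * tpow N x (p + q) w)"
    using tpow_scale[of N "-1" x]
    by (simp add: texp_def tmul_sum_left tmul_sum_right tmul_divide_left tmul_divide_right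
        tmul_scale_right tpow_add mult_ac)
  also have "\<dots> = (\<Sum>m\<le>N. (\<Sum>p\<le>m. 1 / fact p * ((-1) ^ (m - p) / fact (m - p))) * tpow N x m w)"
    by (rule sum_sum_by_total_degree)
      (auto intro: levels_ge_levels_le_zero[OF levels_ge_tpow[OF assms(2)] levels_le_tpow])
  also have "\<dots> = (\<Sum>m\<in>{0}. (\<Sum>p\<le>m. 1 / fact p * ((-1) ^ (m - p) / fact (m - p))) * tpow N x m w)"
    by (rule sum.mono_neutral_right) (use exp_mul_exp_neg_coeff in auto)
  also have "\<dots> = tone w"
    by simp
  finally show "tmul N (texp N x) (texp N (\<lambda>w. - x w)) w = tone w" .
qed

definition tline :: "tens \<Rightarrow> tens \<Rightarrow> real \<Rightarrow> tens" where
  "tline y v t = (\<lambda>w. y w + t * v w)"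

fun line_pow_deriv :: "nat \<Rightarrow> tens \<Rightarrow> tens \<Rightarrow> real \<Rightarrow> nat \<Rightarrow> tens" where
  "line_pow_deriv N y v t 0 = (\<lambda>_. 0)"
| "line_pow_deriv N y v t (Suc k) = (\<lambda>w. tmul N v (tpow N (tline y v t) k) w
      + tmul N (tline y v t) (line_pow_deriv N y v t k) w)"

fun line_pow_deriv2 :: "nat \<Rightarrow> tens \<Rightarrow> tens \<Rightarrow> real \<Rightarrow> nat \<Rightarrow> tens" where
  "line_pow_deriv2 N y v t 0 = (\<lambda>_. 0)"
| "line_pow_deriv2 N y v t (Suc k) = (\<lambda>w. 2 * tmul N v (line_pow_deriv N y v t k) w
      + tmul N (tline y v t) (line_pow_deriv2 N y v t k) w)"

definition line_exp_deriv :: "nat \<Rightarrow> tens \<Rightarrow> tens \<Rightarrow> real \<Rightarrow> tens" where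
  "line_exp_deriv N y v t = (\<lambda>w. \<Sum>k\<le>N. line_pow_deriv N y v t k w / fact k)"

definition line_exp_deriv2 :: "nat \<Rightarrow> tens \<Rightarrow> tens \<Rightarrow> real \<Rightarrow> tens" where
  "line_exp_deriv2 N y v t = (\<lambda>w. \<Sum>k\<le>N. line_pow_deriv2 N y v t k w / fact k)"

lemma tline_0 [simp]: "tline y v 0 = y"
  by (simp add: tline_def)

lemma tmul_has_real_derivative:
  assumes "\<And>w. ((\<lambda>t. x t w) has_real_derivative x' w) (at t0 within S)"
    and "\<And>w. ((\<lambda>t. y t w) has_real_derivative y' w) (at t0 within S)"
  shows "((\<lambda>t. tmul N (x t) (y t) w) has_real_derivative
      tmul N x' (y t0) w + tmul N (x t0) y' w) (at t0 within S)"
proof (cases "length w \<le> N")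
  case True
  have "((\<lambda>t. \<Sum>i\<le>length w. x t (take i w) * y t (drop i w)) has_real_derivative
      (\<Sum>i\<le>length w. x t0 (take i w) * y' (drop i w) + x' (take i w) * y t0 (drop i w)))
      (at t0 within S)"
    by (intro DERIV_sum DERIV_mult' assms)
  then show ?thesis
    using True by (simp add: tmul_apply sum.distrib add.commute)
qed (simp add: tmul_def)

lemma tmul_has_real_derivative_left:
  "(\<And>w. ((\<lambda>t. x t w) has_real_derivative x' w) (at t0 within S)) \<Longrightarrow>
    ((\<lambda>t. tmul N (x t) y w) has_real_derivative tmul N x' y w) (at t0 within S)"
  using tmul_has_real_derivative[of x x' t0 S "\<lambda>_. y" "\<lambda>_. 0"] by simp

lemma tmul_has_real_derivative_right:
  "(\<And>w. ((\<lambda>t. y t w) has_real_derivative y' w) (at t0 within S)) \<Longrightarrow>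
    ((\<lambda>t. tmul N x (y t) w) has_real_derivative tmul N x y' w) (at t0 within S)"
  using tmul_has_real_derivative[of "\<lambda>_. x" "\<lambda>_. 0" t0 S y y'] by simp

lemma tline_has_real_derivative: "((\<lambda>t. tline y v t w) has_real_derivative v w) (at t0 within S)"
  unfolding tline_def by (auto intro!: derivative_eq_intros)

lemma tpow_tline_has_real_derivative:
  "((\<lambda>t. tpow N (tline y v t) k w) has_real_derivative line_pow_deriv N y v t0 k w) (at t0 within S)"
proof (induction k arbitrary: w)
  case (Suc k)
  show ?case
    unfolding tpow_Suc
    by (rule DERIV_cong[OF tmul_has_real_derivative[OF tline_has_real_derivative Suc.IH]]) simp
qed simp

lemma line_pow_deriv_has_real_derivative:
  "((\<lambda>t. line_pow_deriv N y v t k w) has_real_derivative line_pow_deriv2 N y v t0 k w) (at t0 within S)"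
proof (induction k arbitrary: w)
  case (Suc k)
  have "((\<lambda>t. tmul N v (tpow N (tline y v t) k) w) has_real_derivative
      tmul N v (line_pow_deriv N y v t0 k) w) (at t0 within S)"
    by (rule tmul_has_real_derivative_right[OF tpow_tline_has_real_derivative])
  moreover have "((\<lambda>t. tmul N (tline y v t) (line_pow_deriv N y v t k) w) has_real_derivative
      tmul N v (line_pow_deriv N y v t0 k) w + tmul N (tline y v t0) (line_pow_deriv2 N y v t0 k) w)
      (at t0 within S)"
    by (rule tmul_has_real_derivative[OF tline_has_real_derivative Suc.IH])
  ultimately show ?case
    using DERIV_add by fastforce
qed simp

lemma texp_tline_has_real_derivative:
  "((\<lambda>t. texp N (tline y v t) w) has_real_derivative line_exp_deriv N y v t0 w) (at t0 within S)"
  unfolding texp_def line_exp_deriv_def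
  by (intro DERIV_sum DERIV_cdivide tpow_tline_has_real_derivative)

lemma line_exp_deriv_has_real_derivative:
  "((\<lambda>t. line_exp_deriv N y v t w) has_real_derivative line_exp_deriv2 N y v t0 w) (at t0 within S)"
  unfolding line_exp_deriv_def line_exp_deriv2_def
  by (intro DERIV_sum DERIV_cdivide line_pow_deriv_has_real_derivative)

lemma levels_le_line_exp_deriv: "levels_le N (line_exp_deriv N y v t)"
proof -
  have "levels_le N (line_pow_deriv N y v t k)" for k
    by (cases k) (auto simp: levels_le_def tmul_def)
  then show ?thesis
    unfolding line_exp_deriv_def by (rule levels_le_sum)
qed

lemma levels_ge_tline: "levels_ge 1 y \<Longrightarrow> levels_ge 1 v \<Longrightarrow> levels_ge 1 (tline y v t)"
  by (simp add: levels_ge_def tline_def)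

lemma levels_ge_line_pow_deriv:
  assumes "levels_ge 1 y" "levels_ge 1 v"
  shows "levels_ge k (line_pow_deriv N y v t k)"
proof (induction k)
  case (Suc k)
  have "levels_ge (1 + k) (tmul N v (tpow N (tline y v t) k))"
    by (intro levels_ge_tmul assms levels_ge_tpow levels_ge_tline)
  moreover have "levels_ge (1 + k) (tmul N (tline y v t) (line_pow_deriv N y v t k))"
    by (intro levels_ge_tmul assms levels_ge_tline Suc)
  ultimately show ?case
    using levels_ge_add by fastforce
qed simp

lemma levels_ge_line_pow_deriv2:
  assumes "levels_ge 1 y" "levels_ge 1 v"
  shows "levels_ge k (line_pow_deriv2 N y v t k)"
proof (induction k)
  case (Suc k)
  have "levels_ge (1 + k) (\<lambda>w. 2 * tmul N v (line_pow_deriv N y v t k) w)"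
    by (intro levels_ge_scale levels_ge_tmul assms levels_ge_line_pow_deriv)
  moreover have "levels_ge (1 + k) (tmul N (tline y v t) (line_pow_deriv2 N y v t k))"
    by (intro levels_ge_tmul assms levels_ge_tline Suc)
  ultimately show ?case
    using levels_ge_add by fastforce
qed simp

lemma texp_zero: "texp N (\<lambda>_. 0) = tone"
proof
  fix w
  have "tpow N (\<lambda>_. 0) k = (\<lambda>_. 0)" if "0 < k" for k
    using that by (cases k) (simp_all add: tpow_Suc)
  then have "texp N (\<lambda>_. 0) w = (\<Sum>k\<in>{0}. tpow N (\<lambda>_. 0) k w / fact k)"
    unfolding texp_def by (intro sum.mono_neutral_right) auto
  then show "texp N (\<lambda>_. 0) w = tone w"
    by simp
qed

lemma line_exp_deriv_origin:
  assumes "levels_le N v" "1 \<le> N"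
  shows "line_exp_deriv N (\<lambda>_. 0) v 0 = v"
proof
  fix w
  have origin: "tline (\<lambda>_. 0) v 0 = (\<lambda>_. 0)"
    by (simp add: tline_def)
  have pow_deriv: "line_pow_deriv N (\<lambda>_. 0) v 0 k = (if k = 1 then v else (\<lambda>_. 0))" for k
  proof (cases k)
    case (Suc j)
    then show ?thesis
      using assms(1) by (cases j) (auto simp: origin tmul_tone_right tpow_Suc)
  qed simp
  then have "line_exp_deriv N (\<lambda>_. 0) v 0 w = (\<Sum>k\<in>{1}. line_pow_deriv N (\<lambda>_. 0) v 0 k w / fact k)"
    unfolding line_exp_deriv_def by (intro sum.mono_neutral_right) (use assms(2) in auto)
  then show "line_exp_deriv N (\<lambda>_. 0) v 0 w = v w"
    by (simp add: pow_deriv del: line_pow_deriv.simps)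
qed

definition line_exp_jet :: "nat \<Rightarrow> tens \<Rightarrow> tens \<Rightarrow> real \<Rightarrow> nat \<Rightarrow> tens" where
  "line_exp_jet N y v t k = (if k = 0 then texp N (tline y v t)
     else if k = 1 then line_exp_deriv N y v t else line_exp_deriv2 N y v t)"

lemma line_exp_jet_has_real_derivative:
  "k \<le> 1 \<Longrightarrow> ((\<lambda>t. line_exp_jet N y v t k w) has_real_derivative line_exp_jet N y v t0 (Suc k) w) (at t0 within S)"
  by (auto simp: line_exp_jet_def le_Suc_eq texp_tline_has_real_derivative line_exp_deriv_has_real_derivative)

definition tsandwich :: "nat \<Rightarrow> tens \<Rightarrow> tens \<Rightarrow> nat \<Rightarrow> nat \<Rightarrow> tens" where
  "tsandwich N y v i m = tmul N (tmul N (tpow N y i) v) (tpow N y m)"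

lemma tmul_tpow_eq_tsandwich: "levels_le N v \<Longrightarrow> tmul N v (tpow N y k) = tsandwich N y v 0 k"
  by (simp add: tsandwich_def tmul_tone_left)

lemma tmul_tsandwich_left: "tmul N y (tsandwich N y v i m) = tsandwich N y v (Suc i) m"
  by (simp add: tsandwich_def tmul_assoc[symmetric] tpow_Suc)

lemma tmul_tsandwich_right: "tmul N (tsandwich N y v i m) (tpow N y q) = tsandwich N y v i (m + q)"
  by (simp add: tsandwich_def tmul_assoc tpow_add)

lemma tmul_tsandwich_right_1:
  "levels_le N y \<Longrightarrow> tmul N (tsandwich N y v i m) y = tsandwich N y v i (Suc m)"
  using tmul_tsandwich_right[of N y v i m 1] by (simp only: tpow_1 Suc_eq_plus1)

lemma tsandwich_eq_zero:
  assumes "levels_ge 1 y" "levels_ge 1 v" "N \<le> i + m"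
  shows "tsandwich N y v i m w = 0"
proof -
  have "levels_ge (i + 1 + m) (tsandwich N y v i m)"
    unfolding tsandwich_def by (intro levels_ge_tmul levels_ge_tpow assms(1,2))
  moreover have "levels_le N (tsandwich N y v i m)"
    unfolding tsandwich_def by (rule levels_le_tmul)
  ultimately show ?thesis
    using \<open>N \<le> i + m\<close> by (intro levels_ge_levels_le_zero) auto
qed

lemma line_pow_deriv_origin:
  assumes "levels_le N v"
  shows "line_pow_deriv N y v 0 k = (\<lambda>w. \<Sum>j<k. tsandwich N y v j (k - Suc j) w)"
proof (induction k)
  case (Suc k)
  show ?case
  proof
    fix w
    have "line_pow_deriv N y v 0 (Suc k) w
        = tsandwich N y v 0 k w + (\<Sum>j<k. tsandwich N y v (Suc j) (k - Suc j) w)"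
      by (simp add: Suc.IH tmul_sum_right tmul_tsandwich_left tmul_tpow_eq_tsandwich[OF assms])
    also have "\<dots> = (\<Sum>j<Suc k. tsandwich N y v j (Suc k - Suc j) w)"
      by (subst sum.lessThan_Suc_shift) simp
    finally show "line_pow_deriv N y v 0 (Suc k) w = (\<Sum>j<Suc k. tsandwich N y v j (Suc k - Suc j) w)" .
  qed
qed simp

lemma tad_power_eq_sum_tsandwich:
  assumes "levels_le N y" "levels_le N v"
  shows "(tad N y ^^ k) v = (\<lambda>w. \<Sum>i\<le>k. of_nat (k choose i) * (-1) ^ (k - i) * tsandwich N y v i (k - i) w)"
proof (induction k)
  case 0
  have "tsandwich N y v 0 0 = v"
    by (simp add: tsandwich_def tmul_tone_left tmul_tone_right assms levels_le_tmul)
  then show ?case by simp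
next
  case (Suc k)
  define c where "c k i = (of_nat (k choose i) * (-1) ^ (k - i) :: real)" for k i
  have pascal: "c (Suc k) (Suc i) = c k i - c k (Suc i)" if "i \<le> k" for i
  proof (cases "i = k")
    case False
    then have "k - i = Suc (k - Suc i)" using that by simp
    then show ?thesis using that by (simp add: c_def algebra_simps)
  qed (simp add: c_def)
  show ?case
  proof
    fix w
    let ?S = "tsandwich N y v"
    have "(tad N y ^^ Suc k) v w = tad N y (\<lambda>w. \<Sum>i\<le>k. c k i * ?S i (k - i) w) w"
      using Suc.IH by (simp add: c_def)
    also have "\<dots> = (\<Sum>i\<le>k. c k i * ?S (Suc i) (k - i) w) - (\<Sum>i\<le>k. c k i * ?S i (Suc (k - i)) w)"
      by (simp add: tad_def tmul_sum_left tmul_sum_right tmul_scale_left tmul_scale_right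
          tmul_tsandwich_left tmul_tsandwich_right_1[OF assms(1)])
    also have "\<dots> = c (Suc k) 0 * ?S 0 (Suc k) w + (\<Sum>i\<le>k. c (Suc k) (Suc i) * ?S (Suc i) (k - i) w)"
    proof -
      have "(\<Sum>i\<le>k. c k i * ?S i (Suc (k - i)) w)
          = c k 0 * ?S 0 (Suc k) w + (\<Sum>i<k. c k (Suc i) * ?S (Suc i) (k - i) w)"
        by (simp add: sum.atMost_shift Suc_diff_Suc)
      moreover have "(\<Sum>i<k. c k (Suc i) * ?S (Suc i) (k - i) w) = (\<Sum>i\<le>k. c k (Suc i) * ?S (Suc i) (k - i) w)"
        by (simp add: lessThan_Suc_atMost[symmetric] c_def)
      moreover have "c (Suc k) 0 = - c k 0"
        by (simp add: c_def)
      ultimately show ?thesis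
        by (simp add: pascal left_diff_distrib sum_subtractf)
    qed
    also have "\<dots> = (\<Sum>i\<le>Suc k. c (Suc k) i * ?S i (Suc k - i) w)"
      by (subst sum.atMost_Suc_shift) simp
    finally show "(tad N y ^^ Suc k) v w
        = (\<Sum>i\<le>Suc k. of_nat (Suc k choose i) * (-1) ^ (Suc k - i) * ?S i (Suc k - i) w)"
      by (simp add: c_def)
  qed
qed

lemma alternating_binomial_partial_sum:
  "(\<Sum>q\<le>m. (-1) ^ q * of_nat (Suc n choose q) :: real) = (-1) ^ m * of_nat (n choose m)"
  by (induction m) (simp_all add: algebra_simps)

definition G_coeff :: "nat \<Rightarrow> nat \<Rightarrow> real" where
  "G_coeff j m = (-1) ^ m * of_nat ((j + m) choose j) / fact (j + m + 1)"

lemma tG_eq_sum_tsandwich: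
  assumes "levels_le N y" "levels_le N v"
  shows "tG N y v w = (\<Sum>k\<le>N. \<Sum>i\<le>k. G_coeff i (k - i) * tsandwich N y v i (k - i) w)"
  unfolding tG_def tad_power_eq_sum_tsandwich[OF assms]
  by (auto simp: G_coeff_def sum_divide_distrib intro!: sum.cong)

lemma sum_inv_fact_mul_neg_inv_fact_eq_G_coeff:
  "(\<Sum>p\<le>m. 1 / fact (j + p + 1) * ((-1) ^ (m - p) / fact (m - p))) = G_coeff j m"
proof -
  define n where "n = j + m + 1"
  have "(\<Sum>p\<le>m. 1 / fact (j + p + 1) * ((-1) ^ (m - p) / fact (m - p)) :: real)
      = (\<Sum>p\<le>m. (-1) ^ (m - p) * of_nat (n choose (m - p)) / fact n)"
  proof (rule sum.cong[OF refl])
    fix p assume "p \<in> {..m}"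
    then have "n - (m - p) = j + p + 1" by (simp add: n_def)
    moreover have "(of_nat (n choose (m - p)) :: real) = fact n / (fact (m - p) * fact (n - (m - p)))"
      by (rule binomial_fact) (simp add: n_def)
    ultimately show "1 / fact (j + p + 1) * ((-1) ^ (m - p) / fact (m - p))
        = (-1) ^ (m - p) * of_nat (n choose (m - p)) / (fact n :: real)"
      by simp
  qed
  also have "\<dots> = (\<Sum>q\<le>m. (-1) ^ q * of_nat (n choose q)) / fact n"
    unfolding sum_divide_distrib
    by (rule sum.reindex_bij_witness[where i="\<lambda>p. m - p" and j="\<lambda>p. m - p"]) auto
  also have "\<dots> = (-1) ^ m * of_nat ((j + m) choose m) / fact n"
    using alternating_binomial_partial_sum[where m = m and n = "j + m"] by (simp add: n_def)
  finally show ?thesis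
    using binomial_symmetric[of m "j + m"] by (simp add: n_def G_coeff_def)
qed

lemma line_exp_deriv_mul_texp_neg_eq_sum_tsandwich:
  assumes v_le: "levels_le N v" and y_ge: "levels_ge 1 y" and v_ge: "levels_ge 1 v"
  shows "tmul N (line_exp_deriv N y v 0) (texp N (\<lambda>w. - y w)) w
    = (\<Sum>k\<le>N. \<Sum>i\<le>k. G_coeff i (k - i) * tsandwich N y v i (k - i) w)"
proof -
  let ?S = "tsandwich N y v"
  note sandwich = tmul_tsandwich_right tsandwich_eq_zero[OF y_ge v_ge]
  define h where "h k j = (\<Sum>q\<le>N. 1 / fact k * ((-1) ^ q / fact q) * ?S j (k - Suc j + q) w)" for k j
  define g where "g j m = G_coeff j m * ?S j m w" for j m
  have "tmul N (line_exp_deriv N y v 0) (texp N (\<lambda>w. - y w)) w = (\<Sum>k\<le>N. \<Sum>j<k. h k j)"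
    using tpow_scale[of N "-1" y]
    unfolding line_exp_deriv_def texp_def line_pow_deriv_origin[OF v_le] h_def
    by (simp add: tmul_sum_left tmul_sum_right tmul_divide_left tmul_divide_right tmul_scale_right
        sandwich sum_divide_distrib sum_distrib_left mult_ac)
  also have "\<dots> = (\<Sum>j<N. \<Sum>k\<in>{Suc j..N}. h k j)"
    by (rule sum.nested_swap')
  also have "\<dots> = (\<Sum>j<N. \<Sum>m\<le>N - Suc j. g j m)"
  proof (rule sum.cong[OF refl])
    fix j assume "j \<in> {..<N}"
    have "(\<Sum>k\<in>{Suc j..N}. h k j) = (\<Sum>p\<le>N - Suc j. h (p + Suc j) j)"
      by (rule sum.reindex_bij_witness[where i="\<lambda>p. p + Suc j" and j="\<lambda>k. k - Suc j"])
        (use \<open>j \<in> {..<N}\<close> in auto)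
    also have "\<dots> = (\<Sum>p\<le>N - Suc j. \<Sum>q\<le>N. 1 / fact (j + p + 1) * ((-1) ^ q / fact q) * ?S j (p + q) w)"
      by (simp add: h_def add.commute)
    also have "\<dots> = (\<Sum>m\<le>N - Suc j.
        (\<Sum>p\<le>m. 1 / fact (j + p + 1) * ((-1) ^ (m - p) / fact (m - p))) * ?S j m w)"
      by (rule sum_sum_by_total_degree) (auto intro: sandwich)
    also have "\<dots> = (\<Sum>m\<le>N - Suc j. g j m)"
      by (simp only: sum_inv_fact_mul_neg_inv_fact_eq_G_coeff g_def)
    finally show "(\<Sum>k\<in>{Suc j..N}. h k j) = (\<Sum>m\<le>N - Suc j. g j m)" .
  qed
  also have "\<dots> = (\<Sum>(j,m)\<in>Sigma {..<N} (\<lambda>j. {..N - Suc j}). g j m)"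
    by (rule sum.Sigma) auto
  also have "Sigma {..<N} (\<lambda>j. {..N - Suc j}) = {(j,m). j + m < N}"
    by auto
  also have "(\<Sum>(j,m)\<in>{(j,m). j + m < N}. g j m) = (\<Sum>(j,m)\<in>{(j,m). j + m \<le> N}. g j m)"
  proof (rule sum.mono_neutral_left)
    show "finite {(j, m). j + m \<le> N}"
      by (rule finite_subset[of _ "{..N} \<times> {..N}"]) auto
    show "\<forall>i\<in>{(j, m). j + m \<le> N} - {(j, m). j + m < N}. (case i of (j, m) \<Rightarrow> g j m) = 0"
      by (auto simp: g_def intro!: sandwich)
  qed auto
  also have "\<dots> = (\<Sum>k\<le>N. \<Sum>i\<le>k. g i (k - i))"
    by (rule sum.triangle_reindex_eq)
  finally show ?thesis
    by (simp add: g_def)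
qed

lemma line_exp_deriv_mul_texp_neg:
  assumes "levels_le N y" "levels_le N v" "levels_ge 1 y" "levels_ge 1 v"
  shows "tmul N (line_exp_deriv N y v 0) (texp N (\<lambda>w. - y w)) = tG N y v"
  using line_exp_deriv_mul_texp_neg_eq_sum_tsandwich[OF assms(2-4)] tG_eq_sum_tsandwich[OF assms(1,2)]
  by auto

lemma lnorm_eq_L2_set: "lnorm d k x = L2_set x (words d k)"
  by (simp add: lnorm_def L2_set_def)

lemma lnorm_nonneg [simp]: "0 \<le> lnorm d k x"
  by (simp add: lnorm_eq_L2_set)

lemma L2_set_sum_le: "L2_set (\<lambda>w. \<Sum>k\<in>K. f k w) A \<le> (\<Sum>k\<in>K. L2_set (f k) A)"
proof (induction K rule: infinite_finite_induct)
  case (insert a K)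
  have "L2_set (\<lambda>w. f a w + (\<Sum>k\<in>K. f k w)) A \<le> L2_set (f a) A + L2_set (\<lambda>w. \<Sum>k\<in>K. f k w) A"
    by (rule L2_set_triangle_ineq)
  with insert show ?case
    by simp
qed (simp_all add: L2_set_def)

lemma lnorm_sum_le: "lnorm d l (\<lambda>w. \<Sum>k\<in>K. f k w) \<le> (\<Sum>k\<in>K. lnorm d l (f k))"
  unfolding lnorm_eq_L2_set by (rule L2_set_sum_le)

lemma lnorm_add_le: "lnorm d l (\<lambda>w. x w + y w) \<le> lnorm d l x + lnorm d l y"
  unfolding lnorm_eq_L2_set by (rule L2_set_triangle_ineq)

lemma lnorm_scale: "lnorm d l (\<lambda>w. c * x w) = \<bar>c\<bar> * lnorm d l x"
  unfolding lnorm_def by (simp add: power_mult_distrib sum_distrib_left[symmetric] real_sqrt_mult)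

lemma lnorm_divide: "lnorm d l (\<lambda>w. x w / c) = lnorm d l x / \<bar>c\<bar>"
  using lnorm_scale[of d l "inverse c" x] by (simp add: divide_inverse mult.commute abs_inverse)

lemma lnorm_uminus: "lnorm d l (\<lambda>w. - x w) = lnorm d l x"
  using lnorm_scale[of d l "-1" x] by simp

lemma lnorm_zero [simp]: "lnorm d l (\<lambda>_. 0) = 0"
  by (simp add: lnorm_def)

lemma lnorm_cong: "(\<And>w. length w = l \<Longrightarrow> x w = y w) \<Longrightarrow> lnorm d l x = lnorm d l y"
  unfolding lnorm_def words_def by simp

lemma lnorm_levels_ge: "levels_ge m x \<Longrightarrow> l < m \<Longrightarrow> lnorm d l x = 0"
  unfolding lnorm_def levels_ge_def words_def by simp

lemma lnorm_level_0: "lnorm d 0 x = \<bar>x []\<bar>"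
proof -
  have "words d 0 = {[]}"
    by (auto simp: words_def)
  then show ?thesis
    by (simp add: lnorm_def)
qed

lemma lnorm_tone: "lnorm d l tone = (if l = 0 then 1 else 0)"
proof (cases "l = 0")
  case False
  then have "lnorm d l tone = lnorm d l (\<lambda>_. 0)"
    by (intro lnorm_cong) (auto simp: tone_def)
  with False show ?thesis
    by simp
qed (simp add: lnorm_level_0 tone_def)

lemma lnorm_tline_le:
  assumes "0 \<le> t" "t \<le> 1"
  shows "lnorm d l (tline y v t) \<le> max (lnorm d l y) (lnorm d l (tadd y v))"
proof -
  have "tline y v t = (\<lambda>w. (1 - t) * y w + t * tadd y v w)"
    by (auto simp: tline_def tadd_def algebra_simps)
  then have "lnorm d l (tline y v t) \<le> (1 - t) * lnorm d l y + t * lnorm d l (tadd y v)"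
    using lnorm_add_le[of d l "\<lambda>w. (1 - t) * y w" "\<lambda>w. t * tadd y v w"] assms
    by (simp add: lnorm_scale)
  also have "\<dots> \<le> (1 - t) * max (lnorm d l y) (lnorm d l (tadd y v)) + t * max (lnorm d l y) (lnorm d l (tadd y v))"
    using assms by (intro add_mono mult_left_mono) auto
  finally show ?thesis
    by (simp add: algebra_simps)
qed

lemma L2_set_take_drop:
  assumes "k \<le> l"
  shows "L2_set (\<lambda>w. x (take k w) * y (drop k w)) (words d l) = lnorm d k x * lnorm d (l - k) y"
proof -
  have "(\<Sum>w\<in>words d l. (x (take k w) * y (drop k w))\<^sup>2)
      = (\<Sum>(u,v)\<in>words d k \<times> words d (l - k). (x u * y v)\<^sup>2)"
    by (rule sum.reindex_bij_witness[where i="\<lambda>(u,v). u @ v" and j="\<lambda>w. (take k w, drop k w)"])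
      (use assms in \<open>auto simp: words_def dest: in_set_takeD in_set_dropD\<close>)
  also have "\<dots> = (\<Sum>u\<in>words d k. (x u)\<^sup>2) * (\<Sum>v\<in>words d (l - k). (y v)\<^sup>2)"
    by (simp add: sum_product sum.cartesian_product power_mult_distrib)
  finally show ?thesis
    by (simp add: L2_set_def lnorm_def real_sqrt_mult)
qed

lemma lnorm_tmul_le: "lnorm d l (tmul N x y) \<le> (\<Sum>k\<le>l. lnorm d k x * lnorm d (l - k) y)"
proof (cases "l \<le> N")
  case True
  have "lnorm d l (tmul N x y) = lnorm d l (\<lambda>w. \<Sum>k\<le>l. x (take k w) * y (drop k w))"
    by (rule lnorm_cong) (use True in \<open>simp add: tmul_def\<close>)
  also have "\<dots> \<le> (\<Sum>k\<le>l. L2_set (\<lambda>w. x (take k w) * y (drop k w)) (words d l))"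
    unfolding lnorm_eq_L2_set by (rule L2_set_sum_le)
  also have "\<dots> = (\<Sum>k\<le>l. lnorm d k x * lnorm d (l - k) y)"
    by (rule sum.cong) (auto simp: L2_set_take_drop)
  finally show ?thesis .
next
  case False
  then have "lnorm d l (tmul N x y) = lnorm d l (\<lambda>_. 0)"
    by (intro lnorm_cong) (simp add: tmul_def)
  then show ?thesis
    by (simp add: sum_nonneg)
qed

definition mcomps :: "nat \<Rightarrow> nat \<Rightarrow> (nat \<times> bool) list set" where
  "mcomps i m = {p. (\<forall>x\<in>set p. 1 \<le> fst x) \<and> sum_list (map fst p) = m \<and> length (filter snd p) = i}"

definition mcomp_weight :: "(nat \<Rightarrow> real) \<Rightarrow> (nat \<Rightarrow> real) \<Rightarrow> (nat \<times> bool) list \<Rightarrow> real" where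
  "mcomp_weight a z p = prod_list (map (\<lambda>(l, marked). if marked then a l else z l) p)"

definition mcomp_sum :: "(nat \<Rightarrow> real) \<Rightarrow> (nat \<Rightarrow> real) \<Rightarrow> nat \<Rightarrow> nat \<Rightarrow> real" where
  "mcomp_sum a z i m = (\<Sum>p\<in>mcomps i m. mcomp_weight a z p)"

lemma length_le_sum_list_pos:
  fixes f :: "'a \<Rightarrow> nat"
  shows "(\<And>x. x \<in> set p \<Longrightarrow> 1 \<le> f x) \<Longrightarrow> length p \<le> sum_list (map f p)"
  by (induction p) force+

lemma finite_mcomps: "finite (mcomps i m)"
proof -
  have "mcomps i m \<subseteq> {p. set p \<subseteq> {..m} \<times> UNIV \<and> length p \<le> m}"
  proof
    fix p assume p: "p \<in> mcomps i m"
    then have "length p \<le> m"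
      using length_le_sum_list_pos[of p fst] by (auto simp: mcomps_def)
    moreover have "set p \<subseteq> {..m} \<times> UNIV"
    proof
      fix x assume "x \<in> set p"
      then have "fst x \<le> sum_list (map fst p)"
        by (intro member_le_sum_list) auto
      with p show "x \<in> {..m} \<times> UNIV"
        by (cases x) (auto simp: mcomps_def)
    qed
    ultimately show "p \<in> {p. set p \<subseteq> {..m} \<times> UNIV \<and> length p \<le> m}"
      by simp
  qed
  then show ?thesis
    by (rule finite_subset) (intro finite_lists_length_le, simp)
qed

lemma mcomp_weight_append: "mcomp_weight a z (p @ q) = mcomp_weight a z p * mcomp_weight a z q"
  by (simp add: mcomp_weight_def)

lemma mcomps_append: "p \<in> mcomps i k \<Longrightarrow> q \<in> mcomps j m \<Longrightarrow> p @ q \<in> mcomps (i + j) (k + m)"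
  by (auto simp: mcomps_def)

lemma mcomps_0_0: "mcomps 0 0 = {[]}"
proof -
  have "p = []" if "p \<in> mcomps 0 0" for p
    using that by (cases p) (auto simp: mcomps_def)
  then show ?thesis
    by (auto simp: mcomps_def)
qed

lemma mcomp_sum_0_0 [simp]: "mcomp_sum a z 0 0 = 1"
  by (simp add: mcomp_sum_def mcomps_0_0 mcomp_weight_def)

text \<open>All parts are positive, so a composition has at most one prefix of a given sum.\<close>

lemma append_inj_on_mcomps: "inj_on (\<lambda>(p, q). p @ q) (mcomps i k \<times> mcomps j m)"
proof (rule inj_onI, clarify)
  fix p q p' q'
  assume p: "p \<in> mcomps i k" and p': "p' \<in> mcomps i k" and eq: "p @ q = p' @ q'"
  have prefix_eq: "p = p'" if "p @ u = p'" "p \<in> mcomps i k" "p' \<in> mcomps i k" for p p' u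
  proof -
    have "sum_list (map fst (p @ u)) = sum_list (map fst p)"
      using that by (simp add: mcomps_def)
    then have "sum_list (map fst u) = 0"
      by simp
    moreover have "\<forall>x\<in>set u. 1 \<le> fst x"
      using that by (auto simp: mcomps_def)
    ultimately have "u = []"
      by (cases u) auto
    with that show ?thesis
      by simp
  qed
  from eq obtain u where "p = p' @ u \<or> p @ u = p'"
    unfolding append_eq_append_conv2 by blast
  then have "p = p'"
    using prefix_eq p p' by metis
  with eq show "p = p' \<and> q = q'"
    by simp
qed

definition exp_const :: "nat \<Rightarrow> real" where
  "exp_const n = (\<Sum>k\<le>n. (3 * (real n + 1)) ^ k)"

lemma exp_const_nonneg: "0 \<le> exp_const n"
  by (simp add: exp_const_def sum_nonneg)

locale nonneg_weights =
  fixes a z :: "nat \<Rightarrow> real"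
  assumes a_nonneg: "0 \<le> a l" and z_nonneg: "0 \<le> z l"
begin

lemma mcomp_weight_nonneg: "0 \<le> mcomp_weight a z p"
  unfolding mcomp_weight_def by (rule prod_list_nonneg) (auto simp: a_nonneg z_nonneg)

lemma mcomp_sum_nonneg: "0 \<le> mcomp_sum a z i m"
  unfolding mcomp_sum_def by (intro sum_nonneg mcomp_weight_nonneg)

lemma mcomp_weight_le_sum: "p \<in> mcomps i m \<Longrightarrow> mcomp_weight a z p \<le> mcomp_sum a z i m"
  unfolding mcomp_sum_def by (rule member_le_sum) (auto simp: finite_mcomps mcomp_weight_nonneg)

lemma z_le_mcomp_sum: "1 \<le> l \<Longrightarrow> z l \<le> mcomp_sum a z 0 l"
  using mcomp_weight_le_sum[of "[(l, False)]" 0 l] by (simp add: mcomp_weight_def mcomps_def)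

lemma a_le_mcomp_sum: "1 \<le> l \<Longrightarrow> a l \<le> mcomp_sum a z 1 l"
  using mcomp_weight_le_sum[of "[(l, True)]" 1 l] by (simp add: mcomp_weight_def mcomps_def)

lemma mcomp_sum_convolution_le:
  "(\<Sum>k\<le>l. mcomp_sum a z i k * mcomp_sum a z j (l - k)) \<le> (real l + 1) * mcomp_sum a z (i + j) l"
proof -
  let ?A = "\<lambda>k. mcomps i k \<times> mcomps j (l - k)"
  have "(\<Sum>k\<le>l. mcomp_sum a z i k * mcomp_sum a z j (l - k))
      = (\<Sum>k\<le>l. \<Sum>(p, q)\<in>?A k. mcomp_weight a z (p @ q))"
    by (simp add: mcomp_sum_def sum_product sum.cartesian_product mcomp_weight_append)
  also have "\<dots> = (\<Sum>k\<le>l. \<Sum>r\<in>(\<lambda>(p, q). p @ q) ` ?A k. mcomp_weight a z r)"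
    by (subst sum.reindex[OF append_inj_on_mcomps]) (simp add: comp_def case_prod_unfold)
  also have "\<dots> \<le> (\<Sum>k\<le>l. mcomp_sum a z (i + j) l)"
    unfolding mcomp_sum_def
    by (intro sum_mono sum_mono2 finite_mcomps mcomp_weight_nonneg)
      (auto dest: mcomps_append)
  also have "\<dots> = (real l + 1) * mcomp_sum a z (i + j) l"
    by simp
  finally show ?thesis .
qed


definition dominated :: "nat \<Rightarrow> nat \<Rightarrow> nat \<Rightarrow> real \<Rightarrow> tens \<Rightarrow> bool" where
  "dominated d n i C x \<longleftrightarrow> (\<forall>l\<le>n. lnorm d l x \<le> C * mcomp_sum a z i l)"

lemma dominated_mono:
  assumes "dominated d n i C x" "C \<le> C'"
  shows "dominated d n i C' x"
  unfolding dominated_def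
proof (intro allI impI)
  fix l assume "l \<le> n"
  then have "lnorm d l x \<le> C * mcomp_sum a z i l"
    using assms(1) by (simp add: dominated_def)
  also have "\<dots> \<le> C' * mcomp_sum a z i l"
    using assms(2) by (intro mult_right_mono mcomp_sum_nonneg)
  finally show "lnorm d l x \<le> C' * mcomp_sum a z i l" .
qed

lemma dominated_zero: "0 \<le> C \<Longrightarrow> dominated d n i C (\<lambda>_. 0)"
  unfolding dominated_def by (simp add: mcomp_sum_nonneg)

lemma dominated_tone: "dominated d n 0 1 tone"
  unfolding dominated_def by (auto simp: lnorm_tone mcomp_sum_nonneg)

lemma dominated_add:
  assumes "dominated d n i C x" "dominated d n i C' y"
  shows "dominated d n i (C + C') (\<lambda>w. x w + y w)"
  unfolding dominated_def
proof (intro allI impI)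
  fix l assume "l \<le> n"
  have "lnorm d l (\<lambda>w. x w + y w) \<le> lnorm d l x + lnorm d l y"
    by (rule lnorm_add_le)
  also have "\<dots> \<le> C * mcomp_sum a z i l + C' * mcomp_sum a z i l"
    using assms \<open>l \<le> n\<close> by (intro add_mono) (simp_all add: dominated_def)
  finally show "lnorm d l (\<lambda>w. x w + y w) \<le> (C + C') * mcomp_sum a z i l"
    by (simp add: distrib_right)
qed

lemma dominated_scale: "dominated d n i C x \<Longrightarrow> dominated d n i (\<bar>c\<bar> * C) (\<lambda>w. c * x w)"
  unfolding dominated_def by (simp add: lnorm_scale mult.assoc mult_left_mono)

lemma dominated_unmarked:
  assumes "x [] = 0" "\<And>l. 1 \<le> l \<Longrightarrow> lnorm d l x \<le> z l"
  shows "dominated d n 0 1 x"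
  unfolding dominated_def
proof (intro allI impI)
  fix l
  show "lnorm d l x \<le> 1 * mcomp_sum a z 0 l"
  proof (cases "l = 0")
    case False
    then show ?thesis
      using assms(2)[of l] z_le_mcomp_sum[of l] by simp
  qed (use assms(1) in \<open>simp add: lnorm_level_0\<close>)
qed

lemma dominated_marked:
  assumes "x [] = 0" "\<And>l. 1 \<le> l \<Longrightarrow> lnorm d l x \<le> a l"
  shows "dominated d n 1 1 x"
  unfolding dominated_def
proof (intro allI impI)
  fix l
  show "lnorm d l x \<le> 1 * mcomp_sum a z 1 l"
  proof (cases "l = 0")
    case False
    then show ?thesis
      using assms(2)[of l] a_le_mcomp_sum[of l] by simp
  qed (use assms(1) in \<open>simp add: lnorm_level_0 mcomp_sum_nonneg\<close>)
qed

lemma dominated_tmul: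
  assumes "0 \<le> C" "0 \<le> C'" "dominated d n i C x" "dominated d n j C' y"
  shows "dominated d n (i + j) (C * C' * (real n + 1)) (tmul N x y)"
  unfolding dominated_def
proof (intro allI impI)
  fix l assume "l \<le> n"
  have "lnorm d l (tmul N x y) \<le> (\<Sum>k\<le>l. lnorm d k x * lnorm d (l - k) y)"
    by (rule lnorm_tmul_le)
  also have "\<dots> \<le> (\<Sum>k\<le>l. (C * mcomp_sum a z i k) * (C' * mcomp_sum a z j (l - k)))"
    using assms \<open>l \<le> n\<close> unfolding dominated_def
    by (intro sum_mono mult_mono) (auto intro: mult_nonneg_nonneg mcomp_sum_nonneg)
  also have "\<dots> = C * C' * (\<Sum>k\<le>l. mcomp_sum a z i k * mcomp_sum a z j (l - k))"
    by (simp add: sum_distrib_left mult_ac)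
  also have "\<dots> \<le> C * C' * ((real l + 1) * mcomp_sum a z (i + j) l)"
    using assms by (intro mult_left_mono mcomp_sum_convolution_le) auto
  also have "\<dots> \<le> C * C' * ((real n + 1) * mcomp_sum a z (i + j) l)"
    using assms \<open>l \<le> n\<close> by (intro mult_left_mono mult_right_mono mcomp_sum_nonneg) auto
  finally show "lnorm d l (tmul N x y) \<le> C * C' * (real n + 1) * mcomp_sum a z (i + j) l"
    by (simp add: mult_ac)
qed

lemma dominated_exp_series:
  assumes "\<And>k. levels_ge k (x k)" "\<And>k. k \<le> n \<Longrightarrow> dominated d n i (C k) (x k)" "\<And>k. 0 \<le> C k"
  shows "dominated d n i (\<Sum>k\<le>n. C k) (\<lambda>w. \<Sum>k\<le>N. x k w / fact k)"
  unfolding dominated_def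
proof (intro allI impI)
  fix l assume "l \<le> n"
  have "lnorm d l (\<lambda>w. \<Sum>k\<le>N. x k w / fact k) \<le> (\<Sum>k\<le>N. lnorm d l (x k) / fact k)"
    using lnorm_sum_le[of d l "\<lambda>k w. x k w / fact k"] by (simp add: lnorm_divide)
  also have "\<dots> \<le> (\<Sum>k\<le>N. if k \<le> n then C k * mcomp_sum a z i l else 0)"
  proof (rule sum_mono)
    fix k
    show "lnorm d l (x k) / fact k \<le> (if k \<le> n then C k * mcomp_sum a z i l else 0)"
    proof (cases "k \<le> n")
      case True
      have "lnorm d l (x k) / fact k \<le> lnorm d l (x k) / 1"
        by (rule divide_left_mono) (auto simp: fact_ge_1)
      also have "\<dots> \<le> C k * mcomp_sum a z i l"
        using assms(2)[OF True] \<open>l \<le> n\<close> by (simp add: dominated_def)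
      finally show ?thesis
        using True by simp
    next
      case False
      then show ?thesis
        using lnorm_levels_ge[OF assms(1)] \<open>l \<le> n\<close> by simp
    qed
  qed
  also have "\<dots> \<le> (\<Sum>k\<le>n. C k * mcomp_sum a z i l)"
    by (simp add: sum.If_cases sum_nonneg assms(3) mcomp_sum_nonneg)
      (intro sum_mono2 mult_nonneg_nonneg assms(3) mcomp_sum_nonneg; auto)
  finally show "lnorm d l (\<lambda>w. \<Sum>k\<le>N. x k w / fact k) \<le> (\<Sum>k\<le>n. C k) * mcomp_sum a z i l"
    by (simp add: sum_distrib_right)
qed

text \<open>One constant \<open>(3 (n + 1))\<^sup>k\<close> survives the recursions defining the power and its two
  derivatives, since each step costs a factor \<open>n + 1\<close> and adds at most three terms.\<close>

lemma dominated_line_pow: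
  assumes "dominated d n 0 1 (tline y v t)" "dominated d n 1 1 v"
  shows "dominated d n 0 ((3 * (real n + 1)) ^ k) (tpow N (tline y v t) k)
    \<and> dominated d n 1 ((3 * (real n + 1)) ^ k) (line_pow_deriv N y v t k)
    \<and> dominated d n 2 ((3 * (real n + 1)) ^ k) (line_pow_deriv2 N y v t k)"
proof (induction k)
  case 0
  then show ?case
    by (simp add: dominated_tone dominated_zero)
next
  case (Suc k)
  define C where "C = (3 * (real n + 1)) ^ k"
  let ?x = "tline y v t"
  have "0 \<le> C"
    by (simp add: C_def)
  from Suc.IH have pow: "dominated d n 0 C (tpow N ?x k)"
    and deriv: "dominated d n 1 C (line_pow_deriv N y v t k)"
    and deriv2: "dominated d n 2 C (line_pow_deriv2 N y v t k)"
    by (simp_all add: C_def)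
  have x_pow: "dominated d n 0 (C * (real n + 1)) (tmul N ?x (tpow N ?x k))"
    and v_pow: "dominated d n 1 (C * (real n + 1)) (tmul N v (tpow N ?x k))"
    and x_deriv: "dominated d n 1 (C * (real n + 1)) (tmul N ?x (line_pow_deriv N y v t k))"
    and v_deriv: "dominated d n 2 (C * (real n + 1)) (tmul N v (line_pow_deriv N y v t k))"
    and x_deriv2: "dominated d n 2 (C * (real n + 1)) (tmul N ?x (line_pow_deriv2 N y v t k))"
    using dominated_tmul[OF zero_le_one \<open>0 \<le> C\<close> assms(1) pow]
      dominated_tmul[OF zero_le_one \<open>0 \<le> C\<close> assms(2) pow]
      dominated_tmul[OF zero_le_one \<open>0 \<le> C\<close> assms(1) deriv]
      dominated_tmul[OF zero_le_one \<open>0 \<le> C\<close> assms(2) deriv]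
      dominated_tmul[OF zero_le_one \<open>0 \<le> C\<close> assms(1) deriv2]
    by (simp_all add: numeral_2_eq_2)
  have "dominated d n 0 (C * (real n + 1)) (tpow N ?x (Suc k))"
    using x_pow by (simp add: tpow_Suc)
  moreover have "dominated d n 1 (C * (real n + 1) + C * (real n + 1)) (line_pow_deriv N y v t (Suc k))"
    using dominated_add[OF v_pow x_deriv] by simp
  moreover have "dominated d n 2 (2 * (C * (real n + 1)) + C * (real n + 1)) (line_pow_deriv2 N y v t (Suc k))"
    using dominated_add[OF dominated_scale[OF v_deriv, of 2] x_deriv2] by simp
  moreover have "C * (real n + 1) \<le> (3 * (real n + 1)) ^ Suc k"
    and "C * (real n + 1) + C * (real n + 1) \<le> (3 * (real n + 1)) ^ Suc k"
    and "2 * (C * (real n + 1)) + C * (real n + 1) \<le> (3 * (real n + 1)) ^ Suc k"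
    using \<open>0 \<le> C\<close> by (simp_all add: C_def)
  ultimately show ?case
    by (meson dominated_mono)
qed

lemma lnorm_tmul_tmul_le:
  assumes "dominated d n i E x" "dominated d n j E y" "dominated d n 0 E u" "0 \<le> E"
  shows "lnorm d n (tmul N (tmul N x y) u) \<le> E ^ 3 * (real n + 1) ^ 2 * mcomp_sum a z (i + j) n"
proof -
  have "dominated d n (i + j + 0) (E * E * (real n + 1) * E * (real n + 1)) (tmul N (tmul N x y) u)"
    using assms by (intro dominated_tmul mult_nonneg_nonneg) auto
  then show ?thesis
    by (simp add: dominated_def power2_eq_square power3_eq_cube mult_ac)
qed

lemma dominated_line_exp_jet:
  assumes "dominated d n 0 1 (tline y v t)" "dominated d n 1 1 v"
    and "levels_ge 1 y" "levels_ge 1 v" "k \<le> 2"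
  shows "dominated d n k (exp_const n) (line_exp_jet N y v t k)"
proof -
  have "dominated d n 0 (exp_const n) (texp N (tline y v t))"
    and "dominated d n 1 (exp_const n) (line_exp_deriv N y v t)"
    and "dominated d n 2 (exp_const n) (line_exp_deriv2 N y v t)"
    unfolding texp_def line_exp_deriv_def line_exp_deriv2_def exp_const_def
    using dominated_line_pow[OF assms(1,2)] levels_ge_tpow[OF levels_ge_tline[OF assms(3,4)]]
      levels_ge_line_pow_deriv[OF assms(3,4)] levels_ge_line_pow_deriv2[OF assms(3,4)]
    by (intro dominated_exp_series; simp)+
  with \<open>k \<le> 2\<close> show ?thesis
    by (auto simp: line_exp_jet_def numeral_2_eq_2 le_Suc_eq)
qed

end

lemma finite_comps2: "finite (comps2 n)"
proof -
  have "comps2 n \<subseteq> {ls. set ls \<subseteq> {..n} \<and> length ls \<le> n}"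
    using length_le_sum_list_pos[of _ id] member_le_sum_list by (fastforce simp: comps2_def)
  then show ?thesis
    by (rule finite_subset) (intro finite_lists_length_le, simp)
qed

lemma zz_nonneg: "0 \<le> zz d dx y dy l"
  by (simp add: zz_def le_max_iff_disj)

lemma rhs_sum_nonneg: "0 \<le> rhs_sum d n dx y dy"
  unfolding rhs_sum_def by (intro sum_nonneg mult_nonneg_nonneg add_nonneg_nonneg prod_list_nonneg) (auto simp: zz_nonneg)

text \<open>Moving the two marked parts of a marked composition to the front gives a composition
  in \<open>comps2 n\<close> whose term in \<open>rhs_sum\<close> is the weight of the marked composition.\<close>

lemma mcomp_sum_two_le_rhs_sum:
  "mcomp_sum (\<lambda>l. lnorm d l dx + lnorm d l dy) (zz d dx y dy) 2 n \<le> card (mcomps 2 n) * rhs_sum d n dx y dy"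
proof -
  let ?a = "\<lambda>l. lnorm d l dx + lnorm d l dy"
  let ?term = "\<lambda>ls. ?a (ls ! 0) * ?a (ls ! 1) * prod_list (map (zz d dx y dy) (drop 2 ls))"
  have "mcomp_weight ?a (zz d dx y dy) p \<le> rhs_sum d n dx y dy" if p: "p \<in> mcomps 2 n" for p
  proof -
    obtain e1 e2 where marked: "filter snd p = [e1, e2]"
      using p by (auto simp: mcomps_def numeral_2_eq_2 length_Suc_conv)
    define ls where "ls = fst e1 # fst e2 # map fst (filter (\<lambda>x. \<not> snd x) p)"
    have "e1 \<in> set p" "e2 \<in> set p"
      using marked by (metis filter_is_subset list.set_intros subsetD)+
    moreover have "sum_list (map fst p)
        = sum_list (map fst (filter snd p)) + sum_list (map fst (filter (\<lambda>x. \<not> snd x) p))"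
      by (induction p) auto
    ultimately have "ls \<in> comps2 n"
      using p marked by (auto simp: comps2_def mcomps_def ls_def)
    moreover have "mcomp_weight ?a (zz d dx y dy) p = ?term ls"
    proof -
      have "mcomp_weight ?a (zz d dx y dy) p = prod_list (map (\<lambda>x. ?a (fst x)) (filter snd p))
          * prod_list (map (\<lambda>x. zz d dx y dy (fst x)) (filter (\<lambda>x. \<not> snd x) p))"
        by (induction p) (auto simp: mcomp_weight_def)
      then show ?thesis
        by (simp add: marked ls_def o_def mult.assoc)
    qed
    moreover have "0 \<le> ?term ls" for ls
      by (intro mult_nonneg_nonneg add_nonneg_nonneg lnorm_nonneg prod_list_nonneg) (auto simp: zz_nonneg)
    ultimately show ?thesis
      unfolding rhs_sum_def by (metis (no_types, lifting) finite_comps2 member_le_sum)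
  qed
  then have "mcomp_sum ?a (zz d dx y dy) 2 n \<le> (\<Sum>p\<in>mcomps 2 n. rhs_sum d n dx y dy)"
    unfolding mcomp_sum_def by (rule sum_mono)
  then show ?thesis
    by simp
qed

text \<open>\<open>sigf_partial N dx y dy i j s t\<close> is \<open>\<partial>\<^sub>s\<^sup>i \<partial>\<^sub>t\<^sup>j f(s, t)\<close> for \<open>i, j \<le> 2\<close>.\<close>

definition sigf_partial :: "nat \<Rightarrow> tens \<Rightarrow> tens \<Rightarrow> tens \<Rightarrow> nat \<Rightarrow> nat \<Rightarrow> real \<Rightarrow> real \<Rightarrow> tens" where
  "sigf_partial N dx y dy i j s t =
     tmul N (tmul N (line_exp_jet N (\<lambda>_. 0) dx s i) (line_exp_jet N y dy t j)) (texp N (\<lambda>w. - y w))"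

lemma sigf_eq_sigf_partial: "sigf N dx y dy s t = sigf_partial N dx y dy 0 0 s t"
proof -
  have "tscale s dx = tline (\<lambda>_. 0) dx s" "tadd y (tscale t dy) = tline y dy t" "tscale (-1) y = (\<lambda>w. - y w)"
    by (auto simp: tscale_def tadd_def tline_def)
  then show ?thesis
    by (simp add: sigf_def sigf_partial_def line_exp_jet_def)
qed

lemma sigf_partial_has_real_derivative_s:
  "i \<le> 1 \<Longrightarrow> ((\<lambda>s. sigf_partial N dx y dy i j s t w) has_real_derivative
    sigf_partial N dx y dy (Suc i) j s' t w) (at s' within S)"
  unfolding sigf_partial_def
  by (intro tmul_has_real_derivative_left line_exp_jet_has_real_derivative)

lemma sigf_partial_has_real_derivative_t:
  "j \<le> 1 \<Longrightarrow> ((\<lambda>t. sigf_partial N dx y dy i j s t w) has_real_derivative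
    sigf_partial N dx y dy i (Suc j) s t' w) (at t' within S)"
  unfolding sigf_partial_def
  by (intro tmul_has_real_derivative_left tmul_has_real_derivative_right line_exp_jet_has_real_derivative)

lemma sigf_partial_0_0_origin:
  assumes "in_T0 d N y"
  shows "sigf_partial N dx y dy 0 0 0 0 = tone"
  using texp_mul_texp_neg[OF in_T0_levels_le[OF assms] in_T0_levels_ge[OF assms]]
  by (simp add: sigf_partial_def line_exp_jet_def tline_def texp_zero tmul_tone_left levels_le_texp)

lemma sigf_partial_1_0_origin:
  assumes "1 \<le> N" "in_T0 d N dx" "in_T0 d N y"
  shows "sigf_partial N dx y dy 1 0 0 0 = dx"
  using texp_mul_texp_neg[OF in_T0_levels_le[OF assms(3)] in_T0_levels_ge[OF assms(3)]]
    line_exp_deriv_origin[OF in_T0_levels_le[OF assms(2)] assms(1)]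
  by (simp add: sigf_partial_def line_exp_jet_def tmul_assoc tmul_tone_right in_T0_levels_le[OF assms(2)])

lemma sigf_partial_0_1_origin:
  assumes "in_T0 d N y" "in_T0 d N dy"
  shows "sigf_partial N dx y dy 0 1 0 0 = tG N y dy"
  using line_exp_deriv_mul_texp_neg[OF in_T0_levels_le[OF assms(1)] in_T0_levels_le[OF assms(2)]
      in_T0_levels_ge[OF assms(1)] in_T0_levels_ge[OF assms(2)]]
  by (simp add: sigf_partial_def line_exp_jet_def tline_def texp_zero tmul_tone_left
      levels_le_line_exp_deriv)

lemma sigf_factors_dominated:
  fixes a z :: "nat \<Rightarrow> real"
  assumes dx: "in_T0 d N dx" and y: "in_T0 d N y" and dy: "in_T0 d N dy"
    and "0 \<le> s" "s \<le> 1" "0 \<le> t" "t \<le> 1" "i \<le> 2" "j \<le> 2"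
  defines "a \<equiv> \<lambda>l. lnorm d l dx + lnorm d l dy" and "z \<equiv> zz d dx y dy"
  shows "nonneg_weights.dominated a z d n i (exp_const n) (line_exp_jet N (\<lambda>_. 0) dx s i)"
    and "nonneg_weights.dominated a z d n j (exp_const n) (line_exp_jet N y dy t j)"
    and "nonneg_weights.dominated a z d n 0 (exp_const n) (texp N (\<lambda>w. - y w))"
proof -
  interpret nonneg_weights a z
    by unfold_locales (simp_all add: a_def z_def zz_nonneg add_nonneg_nonneg)
  note levels = in_T0_levels_ge[OF dx] in_T0_levels_ge[OF y] in_T0_levels_ge[OF dy]
  have zero: "dx [] = 0" "y [] = 0" "dy [] = 0"
    using dx y dy by (simp_all add: in_T0_def)
  have marked: "dominated d n 1 1 dx" "dominated d n 1 1 dy" "dominated d n 1 1 (\<lambda>_. 0)"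
    using zero by (intro dominated_marked; simp add: a_def add_nonneg_nonneg)+
  have "dominated d n 0 1 (tline (\<lambda>_. 0) dx s)"
    using lnorm_tline_le[OF \<open>0 \<le> s\<close> \<open>s \<le> 1\<close>, of d _ "\<lambda>_. 0" dx] zero
    by (intro dominated_unmarked) (auto simp: z_def zz_def tline_def tadd_def intro: max.coboundedI1)
  with levels marked \<open>i \<le> 2\<close> show "dominated d n i (exp_const n) (line_exp_jet N (\<lambda>_. 0) dx s i)"
    by (intro dominated_line_exp_jet) auto
  have "dominated d n 0 1 (tline y dy t)"
    using lnorm_tline_le[OF \<open>0 \<le> t\<close> \<open>t \<le> 1\<close>, of d _ y dy] zero
    by (intro dominated_unmarked) (auto simp: z_def zz_def tline_def intro: max.coboundedI2)
  with levels marked \<open>j \<le> 2\<close> show "dominated d n j (exp_const n) (line_exp_jet N y dy t j)"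
    by (intro dominated_line_exp_jet) auto
  have "dominated d n 0 1 (tline (\<lambda>w. - y w) (\<lambda>_. 0) 0)"
    using zero by (intro dominated_unmarked) (auto simp: z_def zz_def lnorm_uminus)
  with levels marked have "dominated d n 0 (exp_const n) (line_exp_jet N (\<lambda>w. - y w) (\<lambda>_. 0) 0 0)"
    by (intro dominated_line_exp_jet) (auto simp: levels_ge_def)
  then show "dominated d n 0 (exp_const n) (texp N (\<lambda>w. - y w))"
    by (simp add: line_exp_jet_def)
qed

text \<open>The summand \<open>1\<close> only makes the constant positive.\<close>

definition sigf_const :: "nat \<Rightarrow> real" where
  "sigf_const n = exp_const n ^ 3 * (real n + 1) ^ 2 * card (mcomps 2 n) + 1"

lemma sigf_const_pos: "0 < sigf_const n"
  by (simp add: sigf_const_def exp_const_nonneg add_nonneg_pos)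

lemma sigf_second_partial_le:
  assumes "in_T0 d N dx" "in_T0 d N y" "in_T0 d N dy"
    and "i + j = 2" "0 \<le> s" "s \<le> 1" "0 \<le> t" "t \<le> 1"
  shows "lnorm d n (sigf_partial N dx y dy i j s t) \<le> sigf_const n * rhs_sum d n dx y dy"
proof -
  interpret nonneg_weights "\<lambda>l. lnorm d l dx + lnorm d l dy" "zz d dx y dy"
    by unfold_locales (simp_all add: zz_nonneg add_nonneg_nonneg)
  let ?E = "exp_const n"
  have "i \<le> 2" "j \<le> 2"
    using assms(4) by auto
  note factors = sigf_factors_dominated[OF assms(1-3,5-8) this, of n]
  have "lnorm d n (sigf_partial N dx y dy i j s t)
      \<le> ?E ^ 3 * (real n + 1) ^ 2 * mcomp_sum (\<lambda>l. lnorm d l dx + lnorm d l dy) (zz d dx y dy) 2 n"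
    using lnorm_tmul_tmul_le[OF factors] assms(4) unfolding sigf_partial_def by (simp add: exp_const_nonneg)
  also have "\<dots> \<le> ?E ^ 3 * (real n + 1) ^ 2 * (card (mcomps 2 n) * rhs_sum d n dx y dy)"
    by (intro mult_left_mono mcomp_sum_two_le_rhs_sum) (simp add: exp_const_nonneg)
  also have "\<dots> \<le> sigf_const n * rhs_sum d n dx y dy"
    using rhs_sum_nonneg by (simp add: sigf_const_def algebra_simps)
  finally show ?thesis .
qed

theorem lemma7p10:
  shows "\<exists>c :: nat \<Rightarrow> real. (\<forall>n. 0 < c n) \<and>
    (\<forall>(d::nat) (N::nat) dx y dy. 1 \<le> N \<longrightarrow> in_T0 d N dx \<longrightarrow> in_T0 d N y \<longrightarrow> in_T0 d N dy \<longrightarrow>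
      sigf N dx y dy 0 0 = tone \<and>
      (\<forall>w. ((\<lambda>s. sigf N dx y dy s 0 w) has_real_derivative dx w) (at 0 within {0..1})) \<and>
      (\<forall>w. ((\<lambda>t. sigf N dx y dy 0 t w) has_real_derivative tG N y dy w) (at 0 within {0..1})) \<and>
      (\<forall>n. 2 \<le> n \<longrightarrow> n \<le> N \<longrightarrow>
        (\<exists>f1 f2 f11 f12 f22 :: real \<Rightarrow> real \<Rightarrow> tens.
          (\<forall>s\<in>{0..1}. \<forall>t\<in>{0..1}. \<forall>w\<in>words d n.
             ((\<lambda>s'. sigf N dx y dy s' t w) has_real_derivative f1 s t w) (at s within {0..1}) \<and>
             ((\<lambda>t'. sigf N dx y dy s t' w) has_real_derivative f2 s t w) (at t within {0..1}) \<and>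
             ((\<lambda>s'. f1 s' t w) has_real_derivative f11 s t w) (at s within {0..1}) \<and>
             ((\<lambda>t'. f1 s t' w) has_real_derivative f12 s t w) (at t within {0..1}) \<and>
             ((\<lambda>t'. f2 s t' w) has_real_derivative f22 s t w) (at t within {0..1})) \<and>
          (\<forall>s\<in>{0..1}. \<forall>t\<in>{0..1}.
             max (lnorm d n (f11 s t)) (max (lnorm d n (f12 s t)) (lnorm d n (f22 s t)))
               \<le> c n * rhs_sum d n dx y dy))))"
proof (intro exI[of _ sigf_const] conjI allI impI)
  show "0 < sigf_const n" for n
    by (rule sigf_const_pos)
  fix d N :: nat and dx y dy :: tens
  assume N: "1 \<le> N" and dx: "in_T0 d N dx" and y: "in_T0 d N y" and dy: "in_T0 d N dy"
  note sigf = sigf_eq_sigf_partial[of N dx y dy]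
  show "sigf N dx y dy 0 0 = tone"
    using sigf_partial_0_0_origin[OF y] by (simp add: sigf)
  show "((\<lambda>s. sigf N dx y dy s 0 w) has_real_derivative dx w) (at 0 within {0..1})" for w
    using sigf_partial_1_0_origin[OF N dx y]
      sigf_partial_has_real_derivative_s[of 0 N dx y dy 0 0 w 0 "{0..1}"]
    by (simp add: sigf)
  show "((\<lambda>t. sigf N dx y dy 0 t w) has_real_derivative tG N y dy w) (at 0 within {0..1})" for w
    using sigf_partial_0_1_origin[OF y dy]
      sigf_partial_has_real_derivative_t[of 0 N dx y dy 0 0 w 0 "{0..1}"]
    by (simp add: sigf)
  fix n
  let ?f = "sigf_partial N dx y dy"
  have derivs: "((\<lambda>s'. sigf N dx y dy s' t w) has_real_derivative ?f 1 0 s t w) (at s within {0..1})"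
    "((\<lambda>t'. sigf N dx y dy s t' w) has_real_derivative ?f 0 1 s t w) (at t within {0..1})"
    "((\<lambda>s'. ?f 1 0 s' t w) has_real_derivative ?f 2 0 s t w) (at s within {0..1})"
    "((\<lambda>t'. ?f 1 0 s t' w) has_real_derivative ?f 1 1 s t w) (at t within {0..1})"
    "((\<lambda>t'. ?f 0 1 s t' w) has_real_derivative ?f 0 2 s t w) (at t within {0..1})" for s t w
    using sigf_partial_has_real_derivative_s[of 0] sigf_partial_has_real_derivative_s[of 1]
      sigf_partial_has_real_derivative_t[of 0] sigf_partial_has_real_derivative_t[of 1]
    by (simp_all add: sigf numeral_2_eq_2)
  have bounds: "max (lnorm d n (?f 2 0 s t)) (max (lnorm d n (?f 1 1 s t)) (lnorm d n (?f 0 2 s t)))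
      \<le> sigf_const n * rhs_sum d n dx y dy" if "s \<in> {0..1}" "t \<in> {0..1}" for s t
    using that by (simp add: sigf_second_partial_le[OF dx y dy])
  show "\<exists>f1 f2 f11 f12 f22 :: real \<Rightarrow> real \<Rightarrow> tens.
          (\<forall>s\<in>{0..1}. \<forall>t\<in>{0..1}. \<forall>w\<in>words d n.
             ((\<lambda>s'. sigf N dx y dy s' t w) has_real_derivative f1 s t w) (at s within {0..1}) \<and>
             ((\<lambda>t'. sigf N dx y dy s t' w) has_real_derivative f2 s t w) (at t within {0..1}) \<and>
             ((\<lambda>s'. f1 s' t w) has_real_derivative f11 s t w) (at s within {0..1}) \<and>
             ((\<lambda>t'. f1 s t' w) has_real_derivative f12 s t w) (at t within {0..1}) \<and>
             ((\<lambda>t'. f2 s t' w) has_real_derivative f22 s t w) (at t within {0..1})) \<and>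
          (\<forall>s\<in>{0..1}. \<forall>t\<in>{0..1}.
             max (lnorm d n (f11 s t)) (max (lnorm d n (f12 s t)) (lnorm d n (f22 s t)))
               \<le> sigf_const n * rhs_sum d n dx y dy)"
    by (rule exI[of _ "?f 1 0"], rule exI[of _ "?f 0 1"], rule exI[of _ "?f 2 0"], rule exI[of _ "?f 1 1"],
        rule exI[of _ "?f 0 2"]) (use derivs bounds in blast)
qed

end
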